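(* Let $P$ be a Banach measure on $\mathbf{N}$. Define $g:\mathbf{N}\times\mathbf{N}\to\mathbb{R}$ by $g(\omega_1,\omega_2)=1$ if $\xi_{\omega_1}(\omega_2)\equiv 0\pmod 2$ and $g(\omega_1,\omega_2)=0$ otherwise. Assume the Collatz conjecture holds. Then $g\in\mathcal{G}$, i.e. $$\int_{\mathbf{N}}\Big(\int_{\mathbf{N}} g(\omega_1,\omega_2)\,dP(\omega_2)\Big)dP(\omega_1)=\int_{\mathbf{N}}\Big(\int_{\mathbf{N}} g(\omega_1,\omega_2)\,dP(\omega_1)\Big)dP(\omega_2)$$ (both being equal to $2/3$).
   Context: $\mathbf{N}=\{1,2,3,\dots\}$. A Banach measure is a finitely additive probability measure $P$ defined on all subsets of $\mathbf{N}$ that is shift-invariant: $P(X+1)=P(X)$ for all $X\subseteq\mathbf{N}$, where $X+1=\{x+1:x\in X\}$. For bounded $f:\mathbf{N}\to\mathbb{R}$, $\int f\,dP$ is the integral with respect to the finitely additive measure $P$ (the unique positive linear functional on bounded functions with $\int 1_A\,dP=P(A)$). $\mathcal{G}$ denotes the class of functions $f:\mathbf{N}\times\mathbf{N}\to\mathbb{R}$ for which the two iterated integrals $\int(\int f(\omega_1,\omega_2)\,dP(\omega_2))dP(\omega_1)$ and $\int(\int f(\omega_1,\omega_2)\,dP(\omega_1))dP(\omega_2)$ are equal. The Collatz map $\xi:\mathbf{N}\to\mathbf{N}$ is $\xi(\omega)=\omega/2$ if $\omega$ is even and $\xi(\omega)=3\omega+1$ if $\omega$ is odd; $\xi_n$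 is its $n$-fold iterate. The Collatz conjecture is the statement: for every $\omega\in\mathbf{N}$ there exists $n$ with $\xi_n(\omega)=1$. *)

theory Defs
  imports Main "HOL-Library.Indicator_Function"
begin

text \<open>The paper's N = {1,2,3,...} is modelled inside nat; the point 0 is a
  null point (P {0} = 0, which is in fact implied by the other axioms), so a
  set function on subsets of nat corresponds exactly to one on subsets of N.\<close>

definition banach_measure :: "(nat set \<Rightarrow> real) \<Rightarrow> bool" where
  "banach_measure P \<longleftrightarrow>
     (\<forall>A. 0 \<le> P A) \<and> P UNIV = 1 \<and> P {0} = 0 \<and>
     (\<forall>A B. A \<inter> B = {} \<longrightarrow> P (A \<union> B) = P A + P B) \<and>
     (\<forall>X. P ((\<lambda>x. x + 1) ` X) = P X)"

definition fa_bounded :: "(nat \<Rightarrow> real) \<Rightarrow> bool" where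
  "fa_bounded f \<longleftrightarrow> (\<exists>B. \<forall>x. \<bar>f x\<bar> \<le> B)"

text \<open>The integral w.r.t. a finitely additive measure: the unique positive
  linear functional on bounded functions with value P A on indicators
  (normalised to 0 on unbounded functions so that it is a unique total function).\<close>

definition fa_integral :: "(nat set \<Rightarrow> real) \<Rightarrow> (nat \<Rightarrow> real) \<Rightarrow> real" where
  "fa_integral P = (THE L.
      (\<forall>f g. fa_bounded f \<longrightarrow> fa_bounded g \<longrightarrow> L (\<lambda>x. f x + g x) = L f + L g) \<and>
      (\<forall>c f. fa_bounded f \<longrightarrow> L (\<lambda>x. c * f x) = c * L f) \<and>
      (\<forall>f. fa_bounded f \<longrightarrow> (\<forall>x. 0 \<le> f x) \<longrightarrow> 0 \<le> L f) \<and>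
      (\<forall>A. L (indicator A) = P A) \<and>
      (\<forall>f. \<not> fa_bounded f \<longrightarrow> L f = 0))"

definition collatz :: "nat \<Rightarrow> nat" where
  "collatz n = (if even n then n div 2 else 3 * n + 1)"

definition collatz_conjecture :: bool where
  "collatz_conjecture \<longleftrightarrow> (\<forall>w::nat. w \<ge> 1 \<longrightarrow> (\<exists>n. (collatz ^^ n) w = 1))"

definition collatz_g :: "nat \<Rightarrow> nat \<Rightarrow> real" where
  "collatz_g w1 w2 = (if even ((collatz ^^ w1) w2) then 1 else 0)"

end

theory Submission
  imports Defs Complex_Main "HOL-Number_Theory.Cong"
begin

text \<open>The integral with respect to a finitely additive probability exists and is unique, since every
  bounded function is squeezed between finite-valued functions whose integrals differ by at most
  \<open>\<epsilon>\<close>. A Banach measure vanishes on finite sets, so integrating a convergent sequence gives its limit.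

  The set \<open>A\<^sub>n\<close> of \<open>\<omega>\<close> with \<open>\<xi>\<^sub>n(\<omega>)\<close> even is periodic modulo \<open>2\<^sup>n\<^sup>+\<^sup>1\<close>. Counting residues, the even
  part of \<open>\<xi>\<^sup>-\<^sup>1(S)\<close> has measure \<open>P(S)/2\<close> and its odd part, via the bijection \<open>v \<mapsto> 3v+1\<close> of
  residues, measure \<open>P(S \<inter> 2\<nat>)\<close>; hence \<open>P(A\<^sub>n\<^sub>+\<^sub>1) = 1 - P(A\<^sub>n)/2 \<rightarrow> 2/3\<close>. Under the Collatz
  conjecture every orbit ends in the cycle \<open>1, 4, 2\<close>, so for fixed \<open>\<omega>\<^sub>2\<close> the set of \<open>\<omega>\<^sub>1\<close> with
  \<open>\<xi>\<^sub>\<omega>\<^sub>1(\<omega>\<^sub>2)\<close> even eventually agrees with two residue classes modulo 3, of measure \<open>2/3\<close>.\<close>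

section \<open>Finitely additive probabilities and their integral\<close>

lemma finite_range_add:
  "finite (range s) \<Longrightarrow> finite (range t) \<Longrightarrow> finite (range (\<lambda>x. s x + t x))"
  by (rule finite_subset[of _ "(\<lambda>(a, b). a + b) ` (range s \<times> range t)"]) auto

lemma finite_range_indicator: "finite (range (indicator A :: 'a \<Rightarrow> real))"
  by (rule finite_subset[of _ "{0, 1}"]) (auto simp: indicator_def)

lemma fa_bounded_add: "fa_bounded f \<Longrightarrow> fa_bounded g \<Longrightarrow> fa_bounded (\<lambda>x. f x + g x)"
  unfolding fa_bounded_def by (metis abs_triangle_ineq add_mono order_trans)

lemma fa_bounded_scale: "fa_bounded f \<Longrightarrow> fa_bounded (\<lambda>x. c * f x)"
  unfolding fa_bounded_def by (metis abs_ge_zero abs_mult mult_left_mono)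

lemma fa_bounded_finite_range: "finite (range s) \<Longrightarrow> fa_bounded s"
  unfolding fa_bounded_def by (rule exI[of _ "Max (abs ` range s)"]) auto

lemma fa_bounded_sum:
  "finite Y \<Longrightarrow> (\<And>y. y \<in> Y \<Longrightarrow> fa_bounded (F y)) \<Longrightarrow> fa_bounded (\<lambda>x. \<Sum>y\<in>Y. F y x)"
  by (induction Y rule: finite_induct) (auto intro: fa_bounded_add fa_bounded_finite_range)

lemma fa_bounded_approx:
  assumes "fa_bounded f" "e > 0"
  obtains s where "finite (range s)" "\<And>x. s x \<le> f x" "\<And>x. f x \<le> s x + e"
proof
  obtain B where B: "\<And>x. \<bar>f x\<bar> \<le> B" using assms(1) unfolding fa_bounded_def by blast
  define k where "k x = \<lfloor>f x / e\<rfloor>" for x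
  have "k x \<in> {\<lfloor>- B / e\<rfloor>..\<lfloor>B / e\<rfloor>}" for x
  proof -
    have "- B \<le> f x" "f x \<le> B" using B[of x] by (simp_all add: abs_le_iff)
    then have "- B / e \<le> f x / e" "f x / e \<le> B / e"
      using assms(2) by (simp_all only: divide_right_mono less_imp_le)
    then show ?thesis unfolding k_def by (simp only: atLeastAtMost_iff floor_mono)
  qed
  then have "finite (range k)" by (meson finite_atLeastAtMost_int finite_subset image_subsetI)
  then show "finite (range (\<lambda>x. e * of_int (k x)))" by (rule finite_range_imageI)
  show "e * of_int (k x) \<le> f x" for x
  proof -
    have "of_int (k x) * e \<le> f x"
      using of_int_floor_le[of "f x / e"] unfolding pos_le_divide_eq[OF assms(2)] k_def .
    then show ?thesis by (simp add: mult.commute)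
  qed
  show "f x \<le> e * of_int (k x) + e" for x
  proof -
    have "f x < (of_int (k x) + 1) * e"
      using real_of_int_floor_add_one_gt[of "f x / e"] unfolding pos_divide_less_eq[OF assms(2)] k_def .
    then show ?thesis by (simp add: algebra_simps)
  qed
qed

locale fa_probability =
  fixes P :: "nat set \<Rightarrow> real"
  assumes nonneg: "0 \<le> P A"
    and additive: "A \<inter> B = {} \<Longrightarrow> P (A \<union> B) = P A + P B"
    and total: "P UNIV = 1"
begin

lemma measure_empty: "P {} = 0"
  using additive[of "{}" "{}"] by simp

lemma measure_UN:
  assumes "finite Z" "disjoint_family_on A Z"
  shows "P (\<Union>z\<in>Z. A z) = (\<Sum>z\<in>Z. P (A z))"
  using assms
proof (induction Z rule: finite_induct)
  case empty
  then show ?case by (simp add: measure_empty)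
next
  case (insert z Z)
  have "A z \<inter> (\<Union>y\<in>Z. A y) = {}"
    using insert.prems insert.hyps(2) by (fastforce simp: disjoint_family_on_def)
  moreover have "disjoint_family_on A Z"
    using insert.prems by (auto simp: disjoint_family_on_def)
  ultimately show ?case using insert.IH insert.hyps by (simp add: additive)
qed

definition simple_integral :: "(nat \<Rightarrow> real) \<Rightarrow> real" where
  "simple_integral s = (\<Sum>y\<in>range s. y * P (s -` {y}))"

lemma simple_integral_comp:
  fixes h :: "nat \<Rightarrow> 'a" and \<phi> :: "'a \<Rightarrow> real"
  assumes "finite Z" "range h \<subseteq> Z"
  shows "simple_integral (\<phi> \<circ> h) = (\<Sum>z\<in>Z. \<phi> z * P (h -` {z}))"
proof -
  have "(\<Sum>z\<in>Z. \<phi> z * P (h -` {z}))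
      = (\<Sum>y\<in>\<phi> ` Z. \<Sum>z\<in>{z\<in>Z. \<phi> z = y}. \<phi> z * P (h -` {z}))"
    using assms(1) by (rule sum.image_gen)
  also have "\<dots> = (\<Sum>y\<in>\<phi> ` Z. y * P ((\<phi> \<circ> h) -` {y}))"
  proof (rule sum.cong[OF refl])
    fix y
    have "(\<Sum>z\<in>{z\<in>Z. \<phi> z = y}. \<phi> z * P (h -` {z}))
        = y * (\<Sum>z\<in>{z\<in>Z. \<phi> z = y}. P (h -` {z}))"
      by (simp add: sum_distrib_left)
    also have "(\<Sum>z\<in>{z\<in>Z. \<phi> z = y}. P (h -` {z})) = P (\<Union>z\<in>{z\<in>Z. \<phi> z = y}. h -` {z})"
      using assms(1) by (intro measure_UN[symmetric]) (auto simp: disjoint_family_on_def)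
    also have "(\<Union>z\<in>{z\<in>Z. \<phi> z = y}. h -` {z}) = (\<phi> \<circ> h) -` {y}"
      using assms(2) by (auto simp: image_subset_iff)
    finally show "(\<Sum>z\<in>{z\<in>Z. \<phi> z = y}. \<phi> z * P (h -` {z})) = y * P ((\<phi> \<circ> h) -` {y})" .
  qed
  also have "\<dots> = simple_integral (\<phi> \<circ> h)"
    unfolding simple_integral_def
  proof (rule sum.mono_neutral_right)
    show "\<forall>y\<in>\<phi> ` Z - range (\<phi> \<circ> h). y * P ((\<phi> \<circ> h) -` {y}) = 0"
    proof
      fix y assume "y \<in> \<phi> ` Z - range (\<phi> \<circ> h)"
      then have "(\<phi> \<circ> h) -` {y} = {}" by blast
      then show "y * P ((\<phi> \<circ> h) -` {y}) = 0" by (simp add: measure_empty)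
    qed
  qed (use assms in auto)
  finally show ?thesis ..
qed

lemma simple_integral_add:
  assumes "finite (range s)" "finite (range t)"
  shows "simple_integral (\<lambda>x. s x + t x) = simple_integral s + simple_integral t"
proof -
  let ?h = "\<lambda>x. (s x, t x)" and ?Z = "range s \<times> range t"
  have Z: "finite ?Z" "range ?h \<subseteq> ?Z" using assms by auto
  have "simple_integral ((\<lambda>p. fst p + snd p) \<circ> ?h)
      = simple_integral (fst \<circ> ?h) + simple_integral (snd \<circ> ?h)"
    by (simp only: simple_integral_comp[OF Z] distrib_right sum.distrib)
  then show ?thesis by (simp add: o_def)
qed

lemma simple_integral_scale:
  assumes "finite (range s)"
  shows "simple_integral (\<lambda>x. c * s x) = c * simple_integral s"
proof -
  have "simple_integral ((\<lambda>y. c * y) \<circ> s) = (\<Sum>y\<in>range s. c * y * P (s -` {y}))"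
    using assms by (intro simple_integral_comp) auto
  then show ?thesis by (simp add: o_def simple_integral_def sum_distrib_left mult.assoc)
qed

lemma simple_integral_nonneg: "(\<And>x. 0 \<le> s x) \<Longrightarrow> 0 \<le> simple_integral s"
  unfolding simple_integral_def by (auto intro!: sum_nonneg mult_nonneg_nonneg nonneg)

lemma simple_integral_indicator: "simple_integral (indicator A) = P A"
proof -
  have "indicator A = (\<lambda>b. if b then (1::real) else 0) \<circ> (\<lambda>x. x \<in> A)"
    by (auto simp: indicator_def)
  then have "simple_integral (indicator A) = simple_integral ((\<lambda>b. if b then 1 else 0) \<circ> (\<lambda>x. x \<in> A))"
    by simp
  also have "\<dots> = (\<Sum>b\<in>UNIV. (if b then 1 else 0) * P ((\<lambda>x. x \<in> A) -` {b}))"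
    by (rule simple_integral_comp) auto
  finally show ?thesis by (simp add: UNIV_bool vimage_def)
qed

lemma simple_integral_const: "simple_integral (\<lambda>x. c) = c"
  unfolding simple_integral_def by (simp add: total)

lemma simple_integral_mono:
  assumes "finite (range s)" "finite (range t)" "\<And>x. s x \<le> t x"
  shows "simple_integral s \<le> simple_integral t"
proof -
  have "finite (range (\<lambda>x. -1 * s x))" using assms(1) by (rule finite_range_imageI)
  then have "simple_integral (\<lambda>x. t x + -1 * s x) = simple_integral t - simple_integral s"
    using assms(1,2) by (simp only: simple_integral_add simple_integral_scale)
  moreover have "0 \<le> simple_integral (\<lambda>x. t x + -1 * s x)"
    using assms(3) by (intro simple_integral_nonneg) simp
  ultimately show ?thesis by simp
qed

text \<open>Only needed to show that the functional in the definition of \<open>fa_integral\<close> exists.\<close>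

definition lower_integral :: "(nat \<Rightarrow> real) \<Rightarrow> real" where
  "lower_integral f = (if fa_bounded f
     then Sup {simple_integral s | s. finite (range s) \<and> (\<forall>x. s x \<le> f x)} else 0)"

lemma lower_integral_bounds:
  assumes "fa_bounded f" "finite (range s)" "\<And>x. s x \<le> f x" "finite (range t)" "\<And>x. f x \<le> t x"
  shows "simple_integral s \<le> lower_integral f \<and> lower_integral f \<le> simple_integral t"
proof -
  let ?S = "{simple_integral s | s. finite (range s) \<and> (\<forall>x. s x \<le> f x)}"
  have ub: "y \<le> simple_integral t" if "y \<in> ?S" for y
    using that assms(4,5) by (auto intro!: simple_integral_mono intro: order_trans)
  have "simple_integral s \<le> Sup ?S"
    using ub assms(2,3) by (intro cSup_upper) (auto simp: bdd_above_def)
  moreover have "Sup ?S \<le> simple_integral t"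
    using ub assms(2,3) by (intro cSup_least) auto
  ultimately show ?thesis using assms(1) by (simp add: lower_integral_def)
qed

lemma lower_integral_approx:
  assumes "fa_bounded f" "e > 0"
  obtains s where "finite (range s)" "\<And>x. s x \<le> f x" "\<And>x. f x \<le> s x + e"
    "simple_integral s \<le> lower_integral f" "lower_integral f \<le> simple_integral s + e"
proof -
  obtain s where s: "finite (range s)" "\<And>x. s x \<le> f x" "\<And>x. f x \<le> s x + e"
    using fa_bounded_approx[OF assms] by blast
  have "finite (range (\<lambda>x. s x + e))" using s(1) by (rule finite_range_imageI)
  then have "simple_integral s \<le> lower_integral f \<and> lower_integral f \<le> simple_integral (\<lambda>x. s x + e)"
    using s by (intro lower_integral_bounds[OF assms(1)])
  then show ?thesis
    using that s by (simp add: simple_integral_add simple_integral_const)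
qed

lemma lower_integral_eqI:
  assumes "fa_bounded f"
    and "\<And>e. e > 0 \<Longrightarrow> \<exists>u v. finite (range u) \<and> finite (range v) \<and> (\<forall>x. u x \<le> f x \<and> f x \<le> v x)
      \<and> simple_integral u \<le> c \<and> c \<le> simple_integral v \<and> simple_integral v \<le> simple_integral u + e"
  shows "lower_integral f = c"
proof (rule antisym; rule field_le_epsilon)
  fix e :: real assume "e > 0"
  then obtain u v where uv: "finite (range u)" "finite (range v)" "\<forall>x. u x \<le> f x \<and> f x \<le> v x"
      "simple_integral u \<le> c" "c \<le> simple_integral v" "simple_integral v \<le> simple_integral u + e"
    using assms(2) by blast
  then have "simple_integral u \<le> lower_integral f \<and> lower_integral f \<le> simple_integral v"
    by (intro lower_integral_bounds[OF assms(1)]) auto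
  with uv show "lower_integral f \<le> c + e" "c \<le> lower_integral f + e" by linarith+
qed

lemma lower_integral_simple: "finite (range s) \<Longrightarrow> lower_integral s = simple_integral s"
  using lower_integral_bounds[of s s s] fa_bounded_finite_range by (simp add: antisym)

lemma lower_integral_add:
  assumes f: "fa_bounded f" and g: "fa_bounded g"
  shows "lower_integral (\<lambda>x. f x + g x) = lower_integral f + lower_integral g"
proof (rule lower_integral_eqI[OF fa_bounded_add[OF f g]])
  fix e :: real assume "e > 0"
  then have "e / 2 > 0" by simp
  obtain s where s: "finite (range s)" "\<And>x. s x \<le> f x" "\<And>x. f x \<le> s x + e / 2"
    "simple_integral s \<le> lower_integral f" "lower_integral f \<le> simple_integral s + e / 2"
    using lower_integral_approx[OF f \<open>e / 2 > 0\<close>] by blast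
  obtain t where t: "finite (range t)" "\<And>x. t x \<le> g x" "\<And>x. g x \<le> t x + e / 2"
    "simple_integral t \<le> lower_integral g" "lower_integral g \<le> simple_integral t + e / 2"
    using lower_integral_approx[OF g \<open>e / 2 > 0\<close>] by blast
  have st: "finite (range (\<lambda>x. s x + t x))" using s(1) t(1) by (rule finite_range_add)
  have ste: "finite (range (\<lambda>x. s x + t x + e))" using st by (rule finite_range_imageI)
  have I: "simple_integral (\<lambda>x. s x + t x) = simple_integral s + simple_integral t"
    using s(1) t(1) by (rule simple_integral_add)
  have Ie: "simple_integral (\<lambda>x. s x + t x + e) = simple_integral s + simple_integral t + e"
    using simple_integral_add[OF st, of "\<lambda>x. e"] by (simp add: I simple_integral_const)
  have "\<forall>x. s x + t x \<le> f x + g x \<and> f x + g x \<le> s x + t x + e"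
  proof
    fix x show "s x + t x \<le> f x + g x \<and> f x + g x \<le> s x + t x + e"
      using s(2,3)[of x] t(2,3)[of x] by linarith
  qed
  with st ste show "\<exists>u v. finite (range u) \<and> finite (range v) \<and> (\<forall>x. u x \<le> f x + g x \<and> f x + g x \<le> v x)
      \<and> simple_integral u \<le> lower_integral f + lower_integral g
      \<and> lower_integral f + lower_integral g \<le> simple_integral v \<and> simple_integral v \<le> simple_integral u + e"
    using s(4,5) t(4,5) I Ie
    by (intro exI[of _ "\<lambda>x. s x + t x"] exI[of _ "\<lambda>x. s x + t x + e"]) simp
qed

lemma lower_integral_scale_nonneg:
  assumes f: "fa_bounded f" and c: "c \<ge> 0"
  shows "lower_integral (\<lambda>x. c * f x) = c * lower_integral f"
proof (rule lower_integral_eqI[OF fa_bounded_scale[OF f]])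
  fix e :: real assume "e > 0"
  define d where "d = e / (c + 1)"
  have d: "d > 0" "c * d \<le> e"
    using \<open>e > 0\<close> c by (auto simp: d_def field_simps)
  obtain s where s: "finite (range s)" "\<And>x. s x \<le> f x" "\<And>x. f x \<le> s x + d"
    "simple_integral s \<le> lower_integral f" "lower_integral f \<le> simple_integral s + d"
    using lower_integral_approx[OF f d(1)] by blast
  have cs: "finite (range (\<lambda>x. c * s x))" "finite (range (\<lambda>x. c * s x + c * d))"
    using s(1) by (auto intro: finite_range_imageI)
  have "simple_integral (\<lambda>x. c * s x + c * d) = c * simple_integral s + c * d"
    using cs s(1) by (simp add: simple_integral_add simple_integral_scale simple_integral_const)
  moreover have "c * s x \<le> c * f x \<and> c * f x \<le> c * s x + c * d" for x
    using s(2,3)[of x] c by (auto simp flip: distrib_left intro: mult_left_mono)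
  moreover have "c * simple_integral s \<le> c * lower_integral f"
    "c * lower_integral f \<le> c * simple_integral s + c * d"
    using s(4,5) c by (auto simp flip: distrib_left intro: mult_left_mono)
  ultimately show "\<exists>u v. finite (range u) \<and> finite (range v) \<and> (\<forall>x. u x \<le> c * f x \<and> c * f x \<le> v x)
      \<and> simple_integral u \<le> c * lower_integral f
      \<and> c * lower_integral f \<le> simple_integral v \<and> simple_integral v \<le> simple_integral u + e"
    using cs d s(1) by (intro exI[of _ "\<lambda>x. c * s x"] exI[of _ "\<lambda>x. c * s x + c * d"])
      (simp add: simple_integral_scale)
qed

lemma lower_integral_uminus:
  assumes "fa_bounded f"
  shows "lower_integral (\<lambda>x. - f x) = - lower_integral f"
proof -
  have "fa_bounded (\<lambda>x. - f x)" using fa_bounded_scale[OF assms, of "-1"] by simp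
  then have "lower_integral (\<lambda>x. f x + - f x) = lower_integral f + lower_integral (\<lambda>x. - f x)"
    by (rule lower_integral_add[OF assms])
  then show ?thesis using lower_integral_simple[of "\<lambda>x. 0"] by (simp add: simple_integral_const)
qed

lemma lower_integral_scale:
  assumes "fa_bounded f"
  shows "lower_integral (\<lambda>x. c * f x) = c * lower_integral f"
proof (cases "c \<ge> 0")
  case True
  then show ?thesis using assms by (rule lower_integral_scale_nonneg[rotated])
next
  case False
  have "lower_integral (\<lambda>x. - ((- c) * f x)) = - lower_integral (\<lambda>x. (- c) * f x)"
    using assms by (intro lower_integral_uminus fa_bounded_scale)
  also have "\<dots> = c * lower_integral f"
    using False lower_integral_scale_nonneg[OF assms, of "- c"] by simp
  finally show ?thesis by simp
qed

lemma lower_integral_nonneg: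
  assumes "fa_bounded f" "\<And>x. 0 \<le> f x"
  shows "0 \<le> lower_integral f"
proof -
  obtain t where t: "finite (range t)" "\<And>x. f x \<le> t x + 1"
    using fa_bounded_approx[OF assms(1) zero_less_one] by blast
  have "finite (range (\<lambda>x. t x + 1))" using t(1) by (rule finite_range_imageI)
  then have "simple_integral (\<lambda>x. 0) \<le> lower_integral f"
    using lower_integral_bounds[OF assms(1), of "\<lambda>x. 0" "\<lambda>x. t x + 1"] assms(2) t(2) by simp
  then show ?thesis by (simp add: simple_integral_const)
qed

end

definition is_fa_integral :: "(nat set \<Rightarrow> real) \<Rightarrow> ((nat \<Rightarrow> real) \<Rightarrow> real) \<Rightarrow> bool" where
  "is_fa_integral P L \<longleftrightarrow>
     (\<forall>f g. fa_bounded f \<longrightarrow> fa_bounded g \<longrightarrow> L (\<lambda>x. f x + g x) = L f + L g) \<and>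
     (\<forall>c f. fa_bounded f \<longrightarrow> L (\<lambda>x. c * f x) = c * L f) \<and>
     (\<forall>f. fa_bounded f \<longrightarrow> (\<forall>x. 0 \<le> f x) \<longrightarrow> 0 \<le> L f) \<and>
     (\<forall>A. L (indicator A) = P A) \<and>
     (\<forall>f. \<not> fa_bounded f \<longrightarrow> L f = 0)"

lemma fa_integral_eq_The: "fa_integral P = (THE L. is_fa_integral P L)"
  by (simp only: fa_integral_def is_fa_integral_def)

lemma
  assumes "is_fa_integral P L"
  shows is_fa_integral_add: "fa_bounded f \<Longrightarrow> fa_bounded g \<Longrightarrow> L (\<lambda>x. f x + g x) = L f + L g"
    and is_fa_integral_scale: "fa_bounded f \<Longrightarrow> L (\<lambda>x. c * f x) = c * L f"
    and is_fa_integral_nonneg: "fa_bounded f \<Longrightarrow> (\<And>x. 0 \<le> f x) \<Longrightarrow> 0 \<le> L f"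
    and is_fa_integral_indicator: "L (indicator A) = P A"
    and is_fa_integral_unbounded: "\<not> fa_bounded f \<Longrightarrow> L f = 0"
  using assms unfolding is_fa_integral_def by blast+

lemma is_fa_integral_mono:
  assumes L: "is_fa_integral P L" and f: "fa_bounded f" and g: "fa_bounded g" and le: "\<And>x. f x \<le> g x"
  shows "L f \<le> L g"
proof -
  have mf: "fa_bounded (\<lambda>x. -1 * f x)" using f by (rule fa_bounded_scale)
  have "0 \<le> L (\<lambda>x. g x + -1 * f x)"
    using le by (intro is_fa_integral_nonneg[OF L] fa_bounded_add[OF g mf]) simp
  then show ?thesis
    using is_fa_integral_add[OF L g mf] is_fa_integral_scale[OF L f, of "-1"] by linarith
qed

lemma is_fa_integral_sum:
  assumes L: "is_fa_integral P L" and "finite Y" "\<And>y. y \<in> Y \<Longrightarrow> fa_bounded (F y)"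
  shows "L (\<lambda>x. \<Sum>y\<in>Y. F y x) = (\<Sum>y\<in>Y. L (F y))"
  using assms(2,3)
proof (induction Y rule: finite_induct)
  case empty
  show ?case
    using is_fa_integral_scale[OF L fa_bounded_finite_range[of "\<lambda>x. 0"], of 0] by simp
next
  case (insert y Y)
  then show ?case
    using is_fa_integral_add[OF L _ fa_bounded_sum[of Y F]] by simp
qed

context fa_probability
begin

lemma is_fa_integral_simple:
  assumes L: "is_fa_integral P L" and s: "finite (range s)"
  shows "L s = simple_integral s"
proof -
  have ind: "fa_bounded (indicator A)" for A
    by (rule fa_bounded_finite_range[OF finite_range_indicator])
  have s_sum: "s = (\<lambda>x. \<Sum>y\<in>range s. y * indicator (s -` {y}) x)"
  proof
    fix x
    have "(\<Sum>y\<in>range s. y * indicator (s -` {y}) x) = (\<Sum>y\<in>range s. if y = s x then y else 0)"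
      by (rule sum.cong) (auto simp: indicator_def)
    then show "s x = (\<Sum>y\<in>range s. y * indicator (s -` {y}) x)" using s by simp
  qed
  have "L s = L (\<lambda>x. \<Sum>y\<in>range s. y * indicator (s -` {y}) x)"
    by (rule arg_cong[OF s_sum])
  also have "\<dots> = (\<Sum>y\<in>range s. L (\<lambda>x. y * indicator (s -` {y}) x))"
    using s by (intro is_fa_integral_sum[OF L] fa_bounded_scale ind)
  also have "\<dots> = simple_integral s"
    unfolding simple_integral_def
    by (intro sum.cong refl) (simp add: is_fa_integral_scale[OF L ind] is_fa_integral_indicator[OF L])
  finally show ?thesis .
qed

lemma is_fa_integral_squeeze:
  assumes L: "is_fa_integral P L" and f: "fa_bounded f" and s: "finite (range s)"
    and "\<And>x. s x \<le> f x" "\<And>x. f x \<le> s x + e"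
  shows "simple_integral s \<le> L f \<and> L f \<le> simple_integral s + e"
proof -
  have se: "finite (range (\<lambda>x. s x + e))" using s by (rule finite_range_imageI)
  have "L s \<le> L f" "L f \<le> L (\<lambda>x. s x + e)"
    using assms se by (auto intro!: is_fa_integral_mono[OF L] fa_bounded_finite_range)
  moreover have "simple_integral (\<lambda>x. s x + e) = simple_integral s + e"
    using simple_integral_add[OF s, of "\<lambda>x. e"] by (simp add: simple_integral_const)
  ultimately show ?thesis
    using is_fa_integral_simple[OF L s] is_fa_integral_simple[OF L se] by simp
qed

lemma is_fa_integral_unique:
  assumes L: "is_fa_integral P L" and L': "is_fa_integral P L'"
  shows "L = L'"
proof
  fix f
  show "L f = L' f"
  proof (cases "fa_bounded f")
    case False
    then show ?thesis using is_fa_integral_unbounded[OF L] is_fa_integral_unbounded[OF L'] by simp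
  next
    case True
    have "L f \<le> L' f + e \<and> L' f \<le> L f + e" if e: "e > 0" for e
    proof -
      obtain s where s: "finite (range s)" "\<And>x. s x \<le> f x" "\<And>x. f x \<le> s x + e"
        using fa_bounded_approx[OF True e] by blast
      show ?thesis
        using is_fa_integral_squeeze[OF L True s] is_fa_integral_squeeze[OF L' True s] by linarith
    qed
    then show ?thesis by (meson antisym field_le_epsilon)
  qed
qed

lemma is_fa_integral_lower_integral: "is_fa_integral P lower_integral"
  unfolding is_fa_integral_def
proof (intro conjI allI impI)
  show "lower_integral (indicator A) = P A" for A
    by (simp add: lower_integral_simple[OF finite_range_indicator] simple_integral_indicator)
  show "\<not> fa_bounded f \<Longrightarrow> lower_integral f = 0" for f
    by (simp add: lower_integral_def)
qed (simp_all add: lower_integral_add lower_integral_scale lower_integral_nonneg)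

lemma is_fa_integral: "is_fa_integral P (fa_integral P)"
  unfolding fa_integral_eq_The
  by (rule theI[of "is_fa_integral P", OF is_fa_integral_lower_integral])
    (rule is_fa_integral_unique[OF _ is_fa_integral_lower_integral])

lemma fa_integral_indicator: "fa_integral P (indicator A) = P A"
  by (rule is_fa_integral_indicator[OF is_fa_integral])

lemma fa_integral_add:
  "fa_bounded f \<Longrightarrow> fa_bounded g \<Longrightarrow> fa_integral P (\<lambda>x. f x + g x) = fa_integral P f + fa_integral P g"
  by (rule is_fa_integral_add[OF is_fa_integral])

lemma fa_integral_scale: "fa_bounded f \<Longrightarrow> fa_integral P (\<lambda>x. c * f x) = c * fa_integral P f"
  by (rule is_fa_integral_scale[OF is_fa_integral])

lemma fa_integral_const: "fa_integral P (\<lambda>x. c) = c"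
  using is_fa_integral_simple[OF is_fa_integral, of "\<lambda>x. c"] by (simp add: simple_integral_const)

lemma fa_integral_mono:
  "fa_bounded f \<Longrightarrow> fa_bounded g \<Longrightarrow> (\<And>x. f x \<le> g x) \<Longrightarrow> fa_integral P f \<le> fa_integral P g"
  by (rule is_fa_integral_mono[OF is_fa_integral])

end

section \<open>Shift-invariant probabilities\<close>

definition periodic_mod :: "nat \<Rightarrow> nat set \<Rightarrow> bool" where
  "periodic_mod m S \<longleftrightarrow> (\<forall>w. w \<in> S \<longleftrightarrow> w mod m \<in> S)"

locale shift_invariant_probability = fa_probability +
  assumes shift_invariant: "P ((\<lambda>x. x + 1) ` X) = P X"
    and null_zero: "P {0} = 0"
begin

lemma measure_singleton: "P {k} = 0"
proof (induction k)
  case 0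
  then show ?case by (rule null_zero)
next
  case (Suc k)
  then show ?case using shift_invariant[of "{k}"] by simp
qed

lemma measure_finite: "finite F \<Longrightarrow> P F = 0"
proof (induction F rule: finite_induct)
  case empty
  then show ?case by (rule measure_empty)
next
  case (insert x F)
  then show ?case using additive[of "{x}" F] measure_singleton by simp
qed

lemma measure_eq_if_eventually_eq:
  assumes "\<forall>\<^sub>F n in sequentially. n \<in> A \<longleftrightarrow> n \<in> B"
  shows "P A = P B"
proof -
  obtain N where N: "\<And>n. n \<ge> N \<Longrightarrow> n \<in> A \<longleftrightarrow> n \<in> B"
    using assms by (auto simp: eventually_sequentially)
  have "P (A - B) = 0" "P (B - A) = 0"
    using N by (auto intro!: measure_finite finite_subset[of _ "{..<N}"] simp: not_less[symmetric])
  moreover have "P (A \<inter> B \<union> (A - B)) = P (A \<inter> B) + P (A - B)"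
    "P (B \<inter> A \<union> (B - A)) = P (B \<inter> A) + P (B - A)"
    by (rule additive, blast)+
  ultimately show ?thesis by (simp only: Int_Diff_Un) (simp add: Int_commute)
qed

lemma fa_integral_mono_eventually:
  assumes f: "fa_bounded f" and g: "fa_bounded g" and le: "\<forall>\<^sub>F n in sequentially. f n \<le> g n"
  shows "fa_integral P f \<le> fa_integral P g"
proof -
  obtain N where N: "\<And>n. n \<ge> N \<Longrightarrow> f n \<le> g n" using le by (auto simp: eventually_sequentially)
  obtain Bf Bg where Bf: "\<And>x. \<bar>f x\<bar> \<le> Bf" and Bg: "\<And>x. \<bar>g x\<bar> \<le> Bg"
    using f g unfolding fa_bounded_def by blast
  define u where "u x = (Bf + Bg) * indicator {..<N} x" for x
  have u: "fa_bounded u"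
    unfolding u_def by (intro fa_bounded_scale fa_bounded_finite_range finite_range_indicator)
  have "f x \<le> g x + u x" for x
  proof (cases "x < N")
    case True
    then show ?thesis using Bf[of x] Bg[of x] by (simp add: u_def abs_le_iff)
  next
    case False
    then show ?thesis using N[of x] by (simp add: u_def)
  qed
  then have "fa_integral P f \<le> fa_integral P (\<lambda>x. g x + u x)"
    by (intro fa_integral_mono f fa_bounded_add g u)
  also have "\<dots> = fa_integral P g + fa_integral P u"
    by (rule fa_integral_add[OF g u])
  also have "fa_integral P u = 0"
    unfolding u_def fa_integral_scale[OF fa_bounded_finite_range[OF finite_range_indicator]]
    by (simp add: fa_integral_indicator measure_finite)
  finally show ?thesis by simp
qed

lemma fa_integral_tendsto:
  assumes lim: "h \<longlonglongrightarrow> c"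
  shows "fa_integral P h = c"
proof -
  obtain K where "\<And>n. norm (h n) \<le> K"
    using convergent_imp_Bseq[OF convergentI[OF lim]] unfolding Bseq_def by blast
  then have h: "fa_bounded h" unfolding fa_bounded_def by auto
  have const: "fa_bounded (\<lambda>x. a)" for a
    by (rule fa_bounded_finite_range) simp
  have bounds: "fa_integral P h \<le> c + e \<and> c - e \<le> fa_integral P h" if e: "e > 0" for e
  proof -
    have "\<forall>\<^sub>F n in sequentially. h n \<le> c + e"
      by (rule eventually_mono[OF order_tendstoD(2)[OF lim, of "c + e"]]) (use e in auto)
    moreover have "\<forall>\<^sub>F n in sequentially. c - e \<le> h n"
      by (rule eventually_mono[OF order_tendstoD(1)[OF lim, of "c - e"]]) (use e in auto)
    ultimately show ?thesis
      using fa_integral_mono_eventually[OF h const] fa_integral_mono_eventually[OF const h]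
      unfolding fa_integral_const by blast
  qed
  have "fa_integral P h \<le> c"
    by (rule field_le_epsilon) (use bounds in blast)
  moreover have "c \<le> fa_integral P h"
    by (rule field_le_epsilon) (use bounds in force)
  ultimately show ?thesis by (rule antisym)
qed

lemma measure_residue_class_eq:
  assumes "Suc r < m"
  shows "P {w. w mod m = Suc r} = P {w. w mod m = r}"
proof -
  have "{w. w mod m = Suc r} = (\<lambda>x. x + 1) ` {w. w mod m = r}"
  proof (intro set_eqI iffI)
    fix w assume "w \<in> {w. w mod m = Suc r}"
    then obtain v where "w = Suc v" "v mod m = r"
      using assms by (cases w) (auto simp: mod_Suc split: if_splits)
    then show "w \<in> (\<lambda>x. x + 1) ` {w. w mod m = r}" by auto
  qed (use assms in \<open>auto simp: mod_Suc\<close>)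
  then show ?thesis using shift_invariant by simp
qed

lemma measure_UN_residue_classes:
  "finite Z \<Longrightarrow> P (\<Union>r\<in>Z. {w. w mod m = r}) = (\<Sum>r\<in>Z. P {w. w mod m = r})"
  by (rule measure_UN) (auto simp: disjoint_family_on_def)

lemma measure_residue_class:
  assumes "r < m"
  shows "P {w. w mod m = r} = 1 / m"
proof -
  have classes: "P {w. w mod m = r} = P {w. w mod m = 0}" if "r < m" for r
    using that
  proof (induction r)
    case (Suc r)
    then show ?case using measure_residue_class_eq[of r m] by simp
  qed simp
  have "(\<Union>r\<in>{..<m}. {w. w mod m = r}) = UNIV"
    using assms by auto
  then have "1 = (\<Sum>r\<in>{..<m}. P {w. w mod m = r})"
    using total measure_UN_residue_classes[of "{..<m}" m] by simp
  also have "\<dots> = (\<Sum>r\<in>{..<m}. P {w. w mod m = 0})"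
    by (rule sum.cong[OF refl classes]) simp
  finally have "P {w. w mod m = 0} = 1 / m"
    using assms by (simp add: field_simps)
  with classes[OF assms] show ?thesis by (rule trans)
qed

lemma measure_periodic:
  assumes "m > 0" "periodic_mod m S"
  shows "P S = card (S \<inter> {..<m}) / m"
proof -
  have "S = (\<Union>r\<in>S \<inter> {..<m}. {w. w mod m = r})"
    using assms unfolding periodic_mod_def by auto
  then have "P S = P (\<Union>r\<in>S \<inter> {..<m}. {w. w mod m = r})"
    by (rule arg_cong)
  also have "\<dots> = (\<Sum>r\<in>S \<inter> {..<m}. P {w. w mod m = r})"
    by (rule measure_UN_residue_classes) simp
  also have "\<dots> = (\<Sum>r\<in>S \<inter> {..<m}. 1 / m)"
    by (rule sum.cong) (simp_all add: measure_residue_class)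
  finally show ?thesis by simp
qed

end

section \<open>The Collatz map modulo powers of two\<close>

lemma collatz_cong_pow2:
  assumes "[w = v] (mod 2 ^ Suc k)"
  shows "[collatz w = collatz v] (mod 2 ^ k)"
proof -
  have "[w = v] (mod 2)" by (rule cong_dvd_modulus_nat[OF assms]) simp
  then have parity: "even w \<longleftrightarrow> even v" by (simp add: cong_def even_iff_mod_2_eq_zero)
  show ?thesis
  proof (cases "even w")
    case True
    then obtain a b where ab: "w = 2 * a" "v = 2 * b" using parity by (auto elim!: evenE)
    then have "[a = b] (mod 2 ^ k)" using assms by (simp add: cong_def mod_mult_mult1)
    then show ?thesis using ab by (simp add: collatz_def)
  next
    case False
    have "[w = v] (mod 2 ^ k)" by (rule cong_dvd_modulus_nat[OF assms]) simp
    then have "[3 * w + 1 = 3 * v + 1] (mod 2 ^ k)" by (intro cong_add cong_scalar_left cong_refl)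
    then show ?thesis using False parity by (simp add: collatz_def)
  qed
qed

lemma periodic_mod_Int: "periodic_mod m S \<Longrightarrow> periodic_mod m T \<Longrightarrow> periodic_mod m (S \<inter> T)"
  unfolding periodic_mod_def by blast

lemma periodic_mod_evens: "even m \<Longrightarrow> periodic_mod m {w. even w}"
  unfolding periodic_mod_def by (simp add: even_iff_mod_2_eq_zero mod_mod_cancel)

lemma periodic_mod_vimage_collatz:
  assumes "periodic_mod (2 ^ k) S"
  shows "periodic_mod (2 ^ Suc k) (collatz -` S)"
  unfolding periodic_mod_def
proof
  fix w
  have "[collatz w = collatz (w mod 2 ^ Suc k)] (mod 2 ^ k)"
    by (rule collatz_cong_pow2) (simp add: cong_def)
  then show "w \<in> collatz -` S \<longleftrightarrow> w mod 2 ^ Suc k \<in> collatz -` S"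
    using assms unfolding periodic_mod_def cong_def by (metis vimage_eq)
qed

lemma inj_on_affine_mod:
  fixes a b m :: nat
  assumes "coprime a m"
  shows "inj_on (\<lambda>v. (a * v + b) mod m) {..<m}"
proof (rule inj_onI)
  fix v v' assume "v \<in> {..<m}" "v' \<in> {..<m}" "(a * v + b) mod m = (a * v' + b) mod m"
  moreover from this have "[v = v'] (mod m)"
    using assms by (simp add: cong_def[symmetric] cong_add_rcancel_nat cong_mult_lcancel_nat)
  ultimately show "v = v'" by (simp add: cong_less_modulus_unique_nat)
qed

lemma collatz_orbit_one:
  "(collatz ^^ j) 1 = (if j mod 3 = 0 then 1 else if j mod 3 = 1 then 4 else 2)"
proof (induction j)
  case (Suc j)
  have "j mod 3 = 0 \<or> j mod 3 = 1 \<or> j mod 3 = 2" by auto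
  then show ?case using Suc by (auto simp: collatz_def mod_Suc)
qed simp

definition even_after :: "nat \<Rightarrow> nat set" where
  "even_after n = {w. even ((collatz ^^ n) w)}"

lemma even_after_0: "even_after 0 = {w. even w}"
  by (simp add: even_after_def)

lemma even_after_Suc: "even_after (Suc n) = collatz -` even_after n"
  by (simp add: even_after_def funpow_swap1)

lemma periodic_even_after: "periodic_mod (2 ^ Suc n) (even_after n)"
proof (induction n)
  case 0
  then show ?case by (simp add: even_after_0 periodic_mod_evens)
next
  case (Suc n)
  then show ?case unfolding even_after_Suc by (rule periodic_mod_vimage_collatz)
qed

section \<open>The measure of the parity sets\<close>

context shift_invariant_probability
begin

lemma measure_evens: "P {w. even w} = 1 / 2"
proof -
  have "{w. even w} \<inter> {..<2} = {0 :: nat}" by auto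
  then show ?thesis using measure_periodic[of 2 "{w. even w}"] periodic_mod_evens[of 2] by simp
qed

lemma measure_vimage_collatz_evens:
  assumes S: "periodic_mod (2 ^ k) S"
  shows "P (collatz -` S \<inter> {w. even w}) = P S / 2"
proof -
  let ?T = "collatz -` S \<inter> {w. even w}"
  have "(\<lambda>v. 2 * v) ` (S \<inter> {..<2 ^ k}) = ?T \<inter> {..<2 ^ Suc k}"
  proof (intro set_eqI iffI)
    fix w assume "w \<in> ?T \<inter> {..<2 ^ Suc k}"
    then have "w = 2 * (w div 2)" "w div 2 \<in> S \<inter> {..<2 ^ k}" by (auto simp: collatz_def)
    then show "w \<in> (\<lambda>v. 2 * v) ` (S \<inter> {..<2 ^ k})" by (rule image_eqI)
  qed (auto simp: collatz_def)
  then have "card (?T \<inter> {..<2 ^ Suc k}) = card (S \<inter> {..<2 ^ k})"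
    by (metis card_image inj_on_mult nat.simps(3) numeral_2_eq_2)
  moreover have "periodic_mod (2 ^ Suc k) ?T"
    by (intro periodic_mod_Int periodic_mod_vimage_collatz S periodic_mod_evens) simp
  ultimately show ?thesis
    using measure_periodic[OF _ S] measure_periodic[of "2 ^ Suc k" ?T] by simp
qed

lemma measure_vimage_collatz_odds:
  assumes k: "k \<ge> 1" and S: "periodic_mod (2 ^ k) S"
  shows "P (collatz -` S - {w. even w}) = P (S \<inter> {w. even w})"
proof -
  let ?T = "collatz -` S - {w. even w}" and ?E = "S \<inter> {w. even w}"
  define \<phi> where "\<phi> v = (3 * v + 1) mod 2 ^ k" for v :: nat
  have "even ((2 :: nat) ^ k)" using k by simp
  then have parity: "even (w mod 2 ^ k) \<longleftrightarrow> even w" for w :: nat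
    by (simp add: even_iff_mod_2_eq_zero mod_mod_cancel)
  have S_mod: "w \<in> S \<longleftrightarrow> w mod 2 ^ k \<in> S" for w
    using S unfolding periodic_mod_def by blast
  have \<phi>_mod: "\<phi> (w mod 2 ^ k) = \<phi> w" for w
    unfolding \<phi>_def by (metis mod_add_left_eq mod_mult_right_eq)
  have T_iff: "w \<in> ?T \<longleftrightarrow> odd w \<and> \<phi> w \<in> S" for w
    using S_mod[of "3 * w + 1"] by (auto simp: collatz_def \<phi>_def)
  have even_\<phi>: "even (\<phi> w) \<longleftrightarrow> odd w" for w
    using parity[of "3 * w + 1"] by (simp add: \<phi>_def)
  have T: "periodic_mod (2 ^ k) ?T"
    unfolding periodic_mod_def by (simp only: T_iff \<phi>_mod parity) simp
  have inj: "inj_on \<phi> {..<2 ^ k}"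
    unfolding \<phi>_def by (rule inj_on_affine_mod) simp
  have perm: "\<phi> ` {..<2 ^ k} = {..<2 ^ k}"
    by (rule endo_inj_surj[OF _ _ inj]) (auto simp: \<phi>_def)
  have "\<phi> ` (?T \<inter> {..<2 ^ k}) = ?E \<inter> {..<2 ^ k}"
  proof (intro set_eqI iffI)
    fix u assume "u \<in> \<phi> ` (?T \<inter> {..<2 ^ k})"
    then obtain v where "v \<in> ?T" "u = \<phi> v" by blast
    moreover have "\<phi> v < 2 ^ k" by (simp add: \<phi>_def)
    ultimately show "u \<in> ?E \<inter> {..<2 ^ k}" using T_iff[of v] even_\<phi>[of v] by blast
  next
    fix u assume u: "u \<in> ?E \<inter> {..<2 ^ k}"
    then have "u \<in> \<phi> ` {..<2 ^ k}" using perm by simp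
    then obtain v where "v < 2 ^ k" "u = \<phi> v" by blast
    with u show "u \<in> \<phi> ` (?T \<inter> {..<2 ^ k})" using T_iff[of v] even_\<phi>[of v] by blast
  qed
  moreover have "card (\<phi> ` (?T \<inter> {..<2 ^ k})) = card (?T \<inter> {..<2 ^ k})"
    by (rule card_image, rule inj_on_subset[OF inj]) blast
  ultimately have "card (?T \<inter> {..<2 ^ k}) = card (?E \<inter> {..<2 ^ k})" by simp
  moreover have "periodic_mod (2 ^ k) ?E"
    using k by (intro periodic_mod_Int S periodic_mod_evens) simp
  ultimately show ?thesis
    using measure_periodic[OF _ T] measure_periodic[of "2 ^ k" ?E] by simp
qed

lemma measure_even_after:
  "P (even_after n \<inter> {w. even w}) = 1 - P (even_after n) \<and>
   P (even_after n) = 2 / 3 - 1 / 6 * (- 1 / 2) ^ n"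
proof (induction n)
  case 0
  then show ?case by (simp add: even_after_0 measure_evens)
next
  case (Suc n)
  have "P (even_after (Suc n)) = P (even_after (Suc n) \<inter> {w. even w}) + P (even_after (Suc n) - {w. even w})"
    using additive[of "even_after (Suc n) \<inter> {w. even w}" "even_after (Suc n) - {w. even w}"]
    by (simp add: Int_Diff_Un Int_Diff_disjoint)
  moreover have "P (even_after (Suc n) \<inter> {w. even w}) = P (even_after n) / 2"
    unfolding even_after_Suc by (rule measure_vimage_collatz_evens[OF periodic_even_after])
  moreover have "P (even_after (Suc n) - {w. even w}) = P (even_after n \<inter> {w. even w})"
    unfolding even_after_Suc by (rule measure_vimage_collatz_odds[OF _ periodic_even_after]) simp
  ultimately show ?case using Suc.IH by (simp add: field_simps)
qed

lemma measure_even_after_tendsto: "(\<lambda>n. P (even_after n)) \<longlonglongrightarrow> 2 / 3"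
proof -
  have "(\<lambda>n. 2 / 3 - 1 / 6 * (- 1 / 2 :: real) ^ n) \<longlonglongrightarrow> 2 / 3 - 1 / 6 * 0"
    by (intro tendsto_intros LIMSEQ_power_zero) simp
  then show ?thesis using measure_even_after by simp
qed

lemma measure_even_along_orbit:
  assumes "collatz_conjecture" "w \<ge> 1"
  shows "P {n. even ((collatz ^^ n) w)} = 2 / 3"
proof -
  obtain n0 where n0: "(collatz ^^ n0) w = 1"
    using assms unfolding collatz_conjecture_def by blast
  let ?C = "{n. n mod 3 \<noteq> n0 mod 3}"
  have "even ((collatz ^^ n) w) \<longleftrightarrow> n \<in> ?C" if "n \<ge> n0" for n
  proof -
    have "(collatz ^^ n) w = (collatz ^^ (n - n0)) 1"
      using that n0 funpow_add[of "n - n0" n0 collatz] by simp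
    then have "even ((collatz ^^ n) w) \<longleftrightarrow> (n - n0) mod 3 \<noteq> 0"
      using collatz_orbit_one[of "n - n0"] by simp
    also have "\<dots> \<longleftrightarrow> n mod 3 \<noteq> n0 mod 3" using that by presburger
    finally show ?thesis by simp
  qed
  then have "P {n. even ((collatz ^^ n) w)} = P ?C"
    by (intro measure_eq_if_eventually_eq eventually_sequentiallyI) simp
  also have "\<dots> = card (?C \<inter> {..<3}) / 3"
    using measure_periodic[of 3 ?C] by (simp add: periodic_mod_def)
  also have "?C \<inter> {..<3} = {..<3} - {n0 mod 3}" by auto
  finally show ?thesis by simp
qed

end

theorem theorem5p1:
  assumes "banach_measure P"
    and "collatz_conjecture"
  shows "fa_integral P (\<lambda>w1. fa_integral P (\<lambda>w2. collatz_g w1 w2))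
       = fa_integral P (\<lambda>w2. fa_integral P (\<lambda>w1. collatz_g w1 w2))"
proof -
  interpret shift_invariant_probability P
    using assms(1) unfolding banach_measure_def by unfold_locales auto
  have "(\<lambda>w2. collatz_g w1 w2) = indicator (even_after w1)" for w1
    by (auto simp: collatz_g_def even_after_def indicator_def)
  moreover have "(\<lambda>w1. collatz_g w1 w2) = indicator {n. even ((collatz ^^ n) w2)}" for w2
    by (auto simp: collatz_g_def indicator_def)
  moreover have "(\<lambda>w2. P {n. even ((collatz ^^ n) w2)}) \<longlonglongrightarrow> 2 / 3"
    by (rule tendsto_eventually, rule eventually_sequentiallyI[of 1])
      (simp add: measure_even_along_orbit assms(2))
  ultimately show ?thesis
    using measure_even_after_tendsto by (simp add: fa_integral_indicator fa_integral_tendsto)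
qed

end
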